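(* Let $V$ be a real finite-dimensional inner product space and let $(g(x))_{x\ge0}$ be a semigroup on $V$ satisfying the boundedness assumption. Let $V=V_1\oplus V_2$ be a decomposition into $g$-invariant subspaces with $g(x)|_{V_1}$ invertible for all $x\ge0$ and $g(x)|_{V_2}=0$ for all $x>0$. Then $V_1\perp V_2$.
   Context: A semigroup is a map $g:[0,\infty)\to L(V)$ with $g(0)=\mathrm{id}$ and $g(x+y)=g(x)g(y)$ for all $x,y\ge0$. Boundedness assumption: there is a locally bounded function $f:[0,\infty)\to\mathbb R$, right-continuous at $0$, with $f(0)=1$, such that $\|g(x)\|_{\mathrm{op}}\le f(x)$ for all $x\ge0$, where $\|\cdot\|_{\mathrm{op}}$ is the operator norm induced by the inner product. *)

theory Defs
  imports "HOL-Analysis.Analysis"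
begin

definition op_semigroup :: "(real \<Rightarrow> 'a::real_vector \<Rightarrow> 'a) \<Rightarrow> bool" where
  "op_semigroup g \<longleftrightarrow> (\<forall>x\<ge>0. linear (g x)) \<and> g 0 = id \<and>
     (\<forall>x y. x \<ge> 0 \<longrightarrow> y \<ge> 0 \<longrightarrow> g (x + y) = g x \<circ> g y)"

definition bounded_semigroup :: "(real \<Rightarrow> 'a::real_normed_vector \<Rightarrow> 'a) \<Rightarrow> bool" where
  "bounded_semigroup g \<longleftrightarrow> (\<exists>f :: real \<Rightarrow> real.
     (\<forall>T\<ge>0. \<exists>M. \<forall>x\<in>{0..T}. \<bar>f x\<bar> \<le> M) \<and>
     (f \<longlongrightarrow> f 0) (at_right 0) \<and> f 0 = 1 \<and>
     (\<forall>x\<ge>0. onorm (g x) \<le> f x))"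

end

theory Submission
  imports Defs
begin

text \<open>
  For \<open>u \<in> V\<^sub>1\<close> and \<open>v \<in> V\<^sub>2\<close> and \<open>s > 0\<close> we have \<open>g s (u + v) = g s u\<close>, hence
  \<open>\<parallel>g s u\<parallel> \<le> f s \<parallel>u + v\<parallel>\<close>. Since \<open>g\<close> is uniformly bounded near \<open>0\<close> and invertible on the
  finite-dimensional space \<open>V\<^sub>1\<close>, the preimages of \<open>u\<close> under \<open>g t\<close>, \<open>0 < t \<le> 1\<close>, stay bounded;
  two of them that are close give arbitrarily small \<open>s > 0\<close> with \<open>g s u\<close> close to \<open>u\<close>. As
  \<open>f s \<rightarrow> 1\<close>, this yields \<open>\<parallel>u\<parallel> \<le> \<parallel>u + v\<parallel>\<close>, and minimality of the norm of \<open>u\<close> on the line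
  \<open>u + \<real> v\<close> forces \<open>u \<bottom> v\<close>.
\<close>

lemma inner_eq_zero_if_norm_le_norm_add_scaleR:
  fixes u v :: "'a::real_inner"
  assumes "\<And>t. norm u \<le> norm (u + t *\<^sub>R v)"
  shows "inner u v = 0"
proof (cases "v = 0")
  case False
  define t where "t = - inner u v / inner v v"
  have vv: "inner v v > 0" using False by simp
  have "(norm u)\<^sup>2 \<le> (norm (u + t *\<^sub>R v))\<^sup>2"
    using assms[of t] by (simp add: power_mono)
  also have "\<dots> = (norm u)\<^sup>2 + 2 * t * inner u v + t\<^sup>2 * inner v v"
    unfolding power2_norm_eq_inner
    by (simp add: inner_add_left inner_add_right inner_commute algebra_simps power2_eq_square)
  also have "\<dots> = (norm u)\<^sup>2 - (inner u v)\<^sup>2 / inner v v"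
    using vv by (simp add: t_def field_simps power2_eq_square)
  finally have "(inner u v)\<^sup>2 / inner v v \<le> 0" by simp
  then show ?thesis
    using vv by (simp add: divide_le_0_iff)
qed simp

lemma op_semigroupD:
  assumes "op_semigroup g"
  shows op_semigroup_linear: "x \<ge> 0 \<Longrightarrow> linear (g x)"
    and op_semigroup_add: "x \<ge> 0 \<Longrightarrow> y \<ge> 0 \<Longrightarrow> g (x + y) z = g x (g y z)"
  using assms unfolding op_semigroup_def by auto

lemma bounded_semigroupE:
  fixes g :: "real \<Rightarrow> 'a::euclidean_space \<Rightarrow> 'a"
  assumes "op_semigroup g" and "bounded_semigroup g"
  obtains f M where "(f \<longlongrightarrow> 1) (at_right 0)"
    and "\<And>x z. x \<ge> 0 \<Longrightarrow> norm (g x z) \<le> f x * norm z"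
    and "M > 0" and "\<And>x z. x \<in> {0..1} \<Longrightarrow> norm (g x z) \<le> M * norm z"
proof -
  obtain f :: "real \<Rightarrow> real" where f_loc: "\<forall>T\<ge>0. \<exists>M. \<forall>x\<in>{0..T}. \<bar>f x\<bar> \<le> M"
    and f_lim: "(f \<longlongrightarrow> f 0) (at_right 0)" and f_0: "f 0 = 1"
    and f_onorm: "\<forall>x\<ge>0. onorm (g x) \<le> f x"
    using assms(2) unfolding bounded_semigroup_def by blast
  have f_bound: "norm (g x z) \<le> f x * norm z" if "x \<ge> 0" for x z
  proof -
    have "bounded_linear (g x)"
      using op_semigroup_linear[OF assms(1) that] linear_conv_bounded_linear by blast
    then have "norm (g x z) \<le> onorm (g x) * norm z" by (rule onorm)
    also have "\<dots> \<le> f x * norm z"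
      using f_onorm that by (simp add: mult_right_mono)
    finally show ?thesis .
  qed
  obtain M where M: "\<forall>x\<in>{0..1}. \<bar>f x\<bar> \<le> M" using f_loc by force
  have "norm (g x z) \<le> max M 1 * norm z" if "x \<in> {0..1}" for x z
  proof -
    have "norm (g x z) \<le> f x * norm z"
      using f_bound that by simp
    also have "\<dots> \<le> max M 1 * norm z"
      using M that by (intro mult_right_mono) fastforce+
    finally show ?thesis .
  qed
  moreover have "(f \<longlongrightarrow> 1) (at_right 0)"
    using f_lim f_0 by simp
  ultimately show ?thesis
    using that[of f "max M 1"] f_bound by simp
qed

lemma bounded_seq_close_terms:
  fixes y :: "nat \<Rightarrow> 'a::heine_borel"
  assumes "bounded (range y)" and "\<epsilon> > 0"
  obtains i j where "i < j" and "dist (y j) (y i) < \<epsilon>"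
proof -
  obtain l r where "strict_mono r" and lim: "(y \<circ> r) \<longlonglongrightarrow> l"
    using bounded_imp_convergent_subsequence assms(1) by blast
  from lim have "Cauchy (y \<circ> r)" by (rule LIMSEQ_imp_Cauchy)
  then obtain N where "\<forall>m\<ge>N. \<forall>n\<ge>N. dist ((y \<circ> r) m) ((y \<circ> r) n) < \<epsilon>"
    using metric_CauchyD assms(2) by blast
  then have "dist (y (r (Suc N))) (y (r N)) < \<epsilon>" by simp
  moreover have "r N < r (Suc N)"
    using \<open>strict_mono r\<close> by (simp add: strict_monoD)
  ultimately show ?thesis by (rule that[rotated])
qed

text \<open>The lower bound for \<open>g 1\<close> on \<open>V\<close> propagates to every \<open>g x\<close>, \<open>0 \<le> x \<le> 1\<close>, through
  \<open>g 1 = g (1 - x) \<circ> g x\<close> and the upper bound \<open>M\<close> for \<open>g (1 - x)\<close>.\<close>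

lemma semigroup_uniformly_injective:
  fixes g :: "real \<Rightarrow> 'a::euclidean_space \<Rightarrow> 'a"
  assumes "op_semigroup g" and "subspace V" and "inj_on (g 1) V"
    and M: "M > 0" "\<And>x z. x \<in> {0..1} \<Longrightarrow> norm (g x z) \<le> M * norm z"
  obtains c where "c > 0" and "\<And>x w. x \<in> {0..1} \<Longrightarrow> w \<in> V \<Longrightarrow> c * norm w \<le> norm (g x w)"
proof -
  have lin1: "linear (g 1)" using op_semigroup_linear[OF assms(1)] by simp
  then have "bounded_linear (g 1)" by (simp add: linear_conv_bounded_linear)
  moreover have "\<forall>w\<in>V. g 1 w = 0 \<longrightarrow> w = 0"
    using inj_onD[OF assms(3), of _ 0] subspace_0[OF assms(2)] linear_0[OF lin1] by simp
  ultimately obtain c where c: "c > 0" "\<And>w. w \<in> V \<Longrightarrow> c * norm w \<le> norm (g 1 w)"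
    using injective_imp_isometric[OF closed_subspace[OF assms(2)] assms(2)] by blast
  have "c / M * norm w \<le> norm (g x w)" if "x \<in> {0..1}" "w \<in> V" for x w
  proof -
    have "g 1 w = g (1 - x) (g x w)"
      using op_semigroup_add[OF assms(1), of "1 - x" x] that by simp
    then have "c * norm w \<le> M * norm (g x w)"
      using c(2)[OF \<open>w \<in> V\<close>] M(2)[of "1 - x" "g x w"] that by force
    then show ?thesis
      using M(1) by (simp add: field_simps)
  qed
  moreover have "c / M > 0" using c(1) M(1) by simp
  ultimately show ?thesis using that by blast
qed

lemma semigroup_recurrent:
  fixes g :: "real \<Rightarrow> 'a::euclidean_space \<Rightarrow> 'a"
  assumes "op_semigroup g" and "subspace V" and bij: "\<forall>x\<ge>0. bij_betw (g x) V V"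
    and M: "M > 0" "\<And>x z. x \<in> {0..1} \<Longrightarrow> norm (g x z) \<le> M * norm z"
    and "u \<in> V" and "\<epsilon> > 0" and "0 < \<delta>" "\<delta> \<le> 1"
  obtains s where "0 < s" "s < \<delta>" "norm (g s u - u) < \<epsilon>"
proof -
  have "inj_on (g 1) V"
    using bij bij_betw_imp_inj_on zero_le_one by blast
  then obtain c where c: "c > 0" "\<And>x w. x \<in> {0..1} \<Longrightarrow> w \<in> V \<Longrightarrow> c * norm w \<le> norm (g x w)"
    using semigroup_uniformly_injective[OF assms(1,2) _ M] by blast
  define t where "t n = \<delta> / (real n + 1)" for n :: nat
  have t: "t n \<in> {0..1}" "t n > 0" for n
    using \<open>0 < \<delta>\<close> \<open>\<delta> \<le> 1\<close> by (auto simp: t_def field_simps)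
  have "g (t n) ` V = V" for n
    using bij t(2)[of n] by (simp add: bij_betw_imp_surj_on less_imp_le)
  then have "\<forall>n. \<exists>y\<in>V. u = g (t n) y"
    using \<open>u \<in> V\<close> by (simp add: image_iff[symmetric])
  then obtain y where y: "\<And>n. y n \<in> V" "\<And>n. g (t n) (y n) = u"
    by metis
  have "c * norm (y n) \<le> norm u" for n
    using c(2)[of "t n" "y n"] y[of n] t(1)[of n] by simp
  then have "norm (y n) \<le> norm u / c" for n
    using \<open>c > 0\<close> by (simp add: field_simps)
  then have "bounded (range y)" unfolding bounded_iff by blast
  moreover have "\<epsilon> / M > 0"
    using M(1) \<open>\<epsilon> > 0\<close> by simp
  ultimately obtain i j where "i < j" and close: "dist (y j) (y i) < \<epsilon> / M"
    by (rule bounded_seq_close_terms)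
  define s where "s = t i - t j"
  have "t j < t i"
    unfolding t_def using \<open>i < j\<close> \<open>0 < \<delta>\<close> by (intro divide_strict_left_mono) auto
  moreover have "t i \<le> \<delta>"
    unfolding t_def using \<open>0 < \<delta>\<close> by (simp add: field_simps)
  ultimately have s: "0 < s" "s < \<delta>"
    using t(2)[of j] unfolding s_def by linarith+
  have "g s u = g (t i) (y j)"
    using op_semigroup_add[OF assms(1), of s "t j"] s t y by (simp add: s_def)
  then have "g s u - u = g (t i) (y j - y i)"
    using y linear_diff[OF op_semigroup_linear[OF assms(1)]] t(1)[of i] by simp
  then have "norm (g s u - u) \<le> M * dist (y j) (y i)"
    using M(2) t(1) by (simp add: dist_norm)
  also have "\<dots> < \<epsilon>"
    using close M(1) by (simp add: field_simps)
  finally show ?thesis using s that by blast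
qed

lemma norm_le_norm_add_kernel:
  fixes g :: "real \<Rightarrow> 'a::euclidean_space \<Rightarrow> 'a"
  assumes "op_semigroup g" and "bounded_semigroup g" and "subspace V1"
    and "\<forall>x\<ge>0. bij_betw (g x) V1 V1" and "\<forall>x>0. g x v = 0"
    and "u \<in> V1"
  shows "norm u \<le> norm (u + v)"
proof -
  obtain f M where f_lim: "(f \<longlongrightarrow> 1) (at_right 0)"
    and f_bound: "\<And>x z. x \<ge> 0 \<Longrightarrow> norm (g x z) \<le> f x * norm z"
    and M: "M > 0" "\<And>x z. x \<in> {0..1} \<Longrightarrow> norm (g x z) \<le> M * norm z"
    using bounded_semigroupE[OF assms(1,2)] by blast
  have approx: "norm u \<le> (1 + \<epsilon>) * norm (u + v) + \<epsilon>" if "\<epsilon> > 0" for \<epsilon>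
  proof -
    obtain b where "b > 0" and b: "\<And>x. 0 < x \<Longrightarrow> x < b \<Longrightarrow> dist (f x) 1 < \<epsilon>"
      using tendstoD[OF f_lim \<open>\<epsilon> > 0\<close>] unfolding eventually_at_right_field by blast
    obtain s where s: "0 < s" "s < min b 1" "norm (g s u - u) < \<epsilon>"
      using semigroup_recurrent[OF assms(1,3,4) M assms(6) \<open>\<epsilon> > 0\<close>, of "min b 1"] \<open>b > 0\<close>
      by auto
    have "g s (u + v) = g s u"
      using linear_add[OF op_semigroup_linear[OF assms(1)]] assms(5) s by simp
    then have "norm (g s u) \<le> f s * norm (u + v)"
      using f_bound[of s "u + v"] s by simp
    also have "\<dots> \<le> (1 + \<epsilon>) * norm (u + v)"
      using b[of s] s by (intro mult_right_mono) (auto simp: dist_real_def)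
    finally have "norm (g s u) \<le> (1 + \<epsilon>) * norm (u + v)" .
    moreover have "norm u \<le> norm (g s u) + norm (g s u - u)"
      using norm_triangle_sub[of u "g s u"] by (simp add: norm_minus_commute)
    ultimately show ?thesis using s by linarith
  qed
  show ?thesis
  proof (rule field_le_epsilon)
    fix e :: real
    assume "e > 0"
    define \<epsilon> where "\<epsilon> = e / (norm (u + v) + 1)"
    have "norm (u + v) + 1 > 0"
      using norm_ge_zero[of "u + v"] by linarith
    then have "\<epsilon> > 0" "\<epsilon> * (norm (u + v) + 1) = e"
      using \<open>e > 0\<close> by (simp_all add: \<epsilon>_def)
    with approx[of \<epsilon>] show "norm u \<le> norm (u + v) + e"
      by (simp add: algebra_simps)
  qed
qed

theorem mainTheorem12:
  fixes g :: "real \<Rightarrow> 'a::euclidean_space \<Rightarrow> 'a"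
    and V1 V2 :: "'a set"
  assumes "op_semigroup g" and "bounded_semigroup g"
    and "subspace V1" and "subspace V2"
    and "V1 \<inter> V2 = {0}" and "{u + v | u v. u \<in> V1 \<and> v \<in> V2} = UNIV"
    and "\<forall>x\<ge>0. g x ` V1 \<subseteq> V1" and "\<forall>x\<ge>0. g x ` V2 \<subseteq> V2"
    and "\<forall>x\<ge>0. bij_betw (g x) V1 V1"
    and "\<forall>x>0. \<forall>v\<in>V2. g x v = 0"
  shows "\<forall>u\<in>V1. \<forall>v\<in>V2. inner u v = 0"
proof (intro ballI)
  fix u v
  assume "u \<in> V1" and "v \<in> V2"
  have "norm u \<le> norm (u + t *\<^sub>R v)" for t
  proof -
    have "\<forall>x>0. g x (t *\<^sub>R v) = 0"
      using assms(10) subspace_scale[OF assms(4) \<open>v \<in> V2\<close>] by blast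
    then show ?thesis
      by (rule norm_le_norm_add_kernel[OF assms(1,2,3,9) _ \<open>u \<in> V1\<close>])
  qed
  then show "inner u v = 0"
    by (rule inner_eq_zero_if_norm_le_norm_add_scaleR)
qed

end
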